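(* Let $q$ be a prime power, let $C$ be an $[n,k,d]_q$ Griesmer optimal linear code, and let $k_1=\min\{\Gamma_q(n,k,d),k-1\}$. Then $C$ has a chain of linear subcodes $C_1\subset C_2\subset\cdots\subset C_{k_1}\subset C$ such that, for each $1\le i\le k_1$, $C_i$ has dimension $i$ and effective length $n(C_i)=g_q(i,d)$.
   Context: An $[n,k,d]_q$ linear code is a $k$-dimensional subspace of $\mathbb{F}_q^n$ with minimum nonzero Hamming weight $d$. The support of a code $D$ is the set of coordinates on which some codeword of $D$ is nonzero, and its effective length $n(D)$ is the size of this set. Let $g_q(k,d)=\sum_{i=0}^{k-1}\lceil d/q^i\rceil$. $C$ is Griesmer optimal if $n<g_q(k,d+1)$. For a Griesmer optimal $[n,k,d]_q$ code, $\Gamma_q(n,k,d)=k$ if $n=g_q(k,d)$; otherwise $\Gamma_q(n,k,d)$ is the smallest non-negative integer $k_1$ such that $n-g_q(k_1,d)\ge g_q(k-k_1,\lceil d/q^{k_1}\rceil+1)$ (with $g_q(0,\cdot)=0$). *)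

theory Defs
  imports Main "HOL.Vector_Spaces" "HOL-Library.Function_Algebras" "HOL-Library.Cardinality"
begin

text \<open>Vectors of F_q^n are represented as functions nat => 'a vanishing from index n on.
  The field F_q is an arbitrary finite field type 'a, with q = CARD('a).\<close>

definition vscale :: "'a::field \<Rightarrow> (nat \<Rightarrow> 'a) \<Rightarrow> (nat \<Rightarrow> 'a)" where
  "vscale c v = (\<lambda>i. c * v i)"

interpretation fvs: Vector_Spaces.vector_space "vscale :: 'a::field \<Rightarrow> (nat \<Rightarrow> 'a) \<Rightarrow> (nat \<Rightarrow> 'a)"
  by unfold_locales (auto simp: vscale_def fun_eq_iff algebra_simps)

definition vecs :: "nat \<Rightarrow> (nat \<Rightarrow> 'a::zero) set" where
  "vecs n = {v. \<forall>i\<ge>n. v i = 0}"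

definition hwt :: "nat \<Rightarrow> (nat \<Rightarrow> 'a::zero) \<Rightarrow> nat" where
  "hwt n v = card {i. i < n \<and> v i \<noteq> 0}"

definition linear_code :: "nat \<Rightarrow> nat \<Rightarrow> nat \<Rightarrow> (nat \<Rightarrow> 'a::{finite,field}) set \<Rightarrow> bool" where
  "linear_code n k d C \<longleftrightarrow> fvs.subspace C \<and> C \<subseteq> vecs n \<and> fvs.dim C = k \<and>
     (\<exists>v\<in>C. v \<noteq> 0 \<and> hwt n v = d) \<and> (\<forall>v\<in>C. v \<noteq> 0 \<longrightarrow> d \<le> hwt n v)"

definition code_support :: "(nat \<Rightarrow> 'a::zero) set \<Rightarrow> nat set" where
  "code_support D = {i. \<exists>v\<in>D. v i \<noteq> 0}"

definition eff_length :: "(nat \<Rightarrow> 'a::zero) set \<Rightarrow> nat" where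
  "eff_length D = card (code_support D)"

definition ceil_div :: "nat \<Rightarrow> nat \<Rightarrow> nat" where
  "ceil_div a b = (a + b - 1) div b"

definition griesmer :: "nat \<Rightarrow> nat \<Rightarrow> nat \<Rightarrow> nat" where
  "griesmer q k d = (\<Sum>i<k. ceil_div d (q ^ i))"

definition griesmer_optimal :: "nat \<Rightarrow> nat \<Rightarrow> nat \<Rightarrow> nat \<Rightarrow> bool" where
  "griesmer_optimal q n k d \<longleftrightarrow> n < griesmer q k (d + 1)"

text \<open>Gamma_q(n,k,d). The condition n - g_q(k1,d) >= g_q(k-k1, ...) is written additively
  to avoid truncated subtraction.\<close>
definition Gamma :: "nat \<Rightarrow> nat \<Rightarrow> nat \<Rightarrow> nat \<Rightarrow> nat" where
  "Gamma q n k d = (if n = griesmer q k d then k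
     else (LEAST k1. griesmer q k1 d + griesmer q (k - k1) (ceil_div d (q ^ k1) + 1) \<le> n))"

end

theory Submission
  imports Defs
begin

(* The chain is built one dimension at a time.  Given C_i of dimension i with n(C_i) = g_q(i,d),
   take a complement C' of C_i in C.  If every nonzero word of C' had more than ceil(d/q^i)
   nonzero coordinates outside supp(C_i), the Griesmer bound for C' restricted to those
   coordinates would give n >= g_q(i,d) + g_q(k-i, ceil(d/q^i) + 1), which the definition of
   Gamma_q(n,k,d) excludes for i below it.  So some c in C - C_i adds at most ceil(d/q^i) new
   coordinates, and C_(i+1) = <C_i, c> has n(C_(i+1)) <= g_q(i,d) + ceil(d/q^i) = g_q(i+1,d);
   the Griesmer bound gives the reverse inequality.  The Griesmer bound itself is proved for
   weights counted on an arbitrary finite coordinate set, so that the residual code is again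
   an instance of it. *)

lemma ceil_div_le_iff:
  assumes "0 < b"
  shows "ceil_div a b \<le> c \<longleftrightarrow> a \<le> b * c"
proof -
  have "(a + b - 1) div b \<le> c \<longleftrightarrow> a + b - 1 < b * Suc c"
    using assms by (metis div_less_iff_less_mult mult.commute less_Suc_eq_le)
  also have "\<dots> \<longleftrightarrow> a \<le> b * c"
    using assms by auto
  finally show ?thesis
    unfolding ceil_div_def .
qed

lemma ceil_div_ceil_div:
  assumes "0 < b" "0 < c"
  shows "ceil_div (ceil_div a b) c = ceil_div a (b * c)"
proof -
  have "ceil_div (ceil_div a b) c \<le> y \<longleftrightarrow> ceil_div a (b * c) \<le> y" for y
    using assms by (simp add: ceil_div_le_iff mult.assoc)
  then show ?thesis
    by (meson order_antisym order_refl)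
qed

lemma ceil_div_one [simp]: "ceil_div a (Suc 0) = a"
  by (simp add: ceil_div_def)

lemma ceil_div_mono: "a \<le> a' \<Longrightarrow> ceil_div a b \<le> ceil_div a' b"
  unfolding ceil_div_def by (simp add: div_le_mono)

lemma griesmer_mono: "d \<le> d' \<Longrightarrow> griesmer q k d \<le> griesmer q k d'"
  unfolding griesmer_def by (intro sum_mono ceil_div_mono)

lemma griesmer_add:
  assumes "0 < q"
  shows "griesmer q (i + m) d = griesmer q i d + griesmer q m (ceil_div d (q ^ i))"
  by (induction m) (simp_all add: griesmer_def ceil_div_ceil_div assms power_add)

lemma griesmer_Suc: "0 < q \<Longrightarrow> griesmer q (Suc k) d = d + griesmer q k (ceil_div d q)"
  using griesmer_add[of q 1 k d] by (simp add: griesmer_def)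

lemma griesmer_strict_mono:
  assumes "0 < q" "0 < m"
  shows "griesmer q m d < griesmer q m (Suc d)"
proof -
  obtain m' where "m = Suc m'"
    using assms(2) gr0_implies_Suc by blast
  then show ?thesis
    using griesmer_mono[OF ceil_div_mono[of d "Suc d" q], of q m'] by (simp add: griesmer_Suc assms(1))
qed

lemma less_griesmer_split_if_less_Gamma:
  assumes "0 < q" "j < Gamma q n k d"
  shows "n < griesmer q j d + griesmer q (k - j) (ceil_div d (q ^ j) + 1)"
proof (cases "n = griesmer q k d")
  case True
  then have "j < k"
    using assms(2) by (simp add: Gamma_def)
  then have "n = griesmer q j d + griesmer q (k - j) (ceil_div d (q ^ j))"
    using True griesmer_add[OF assms(1), of j "k - j" d] by simp
  then show ?thesis
    using griesmer_strict_mono[OF assms(1), of "k - j"] \<open>j < k\<close> by simp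
next
  case False
  then show ?thesis
    using assms(2) not_less_Least[of j] by (fastforce simp: Gamma_def)
qed

context vector_space
begin

lemma span_Int_span_eq_zero:
  assumes "independent B" "A \<subseteq> B" "A' \<subseteq> B" "A \<inter> A' = {}"
  shows "span A \<inter> span A' = {0}"
proof -
  have "u = 0" if u: "u \<in> span A" "u \<in> span A'" for u
  proof -
    have "representation B u = representation A u" "representation B u = representation A' u"
      using representation_extend[OF assms(1) u(1) assms(2)]
        representation_extend[OF assms(1) u(2) assms(3)] by simp_all
    then have "representation B u b = 0" for b
      using representation_ne_zero[of A u b] representation_ne_zero[of A' u b] assms(4) by auto
    then have "(\<Sum>b | representation B u b \<noteq> 0. representation B u b *s b) = 0"
      by simp
    moreover have "u \<in> span B"
      using u(1) span_mono[OF assms(2)] by blast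
    ultimately show "u = 0"
      using sum_nonzero_representation_eq[OF assms(1)] by simp
  qed
  then show ?thesis
    using span_zero by auto
qed

lemma dim_single_0: "dim {0} = 0"
  using dim_span[of "{}"] dim_eq_card_independent[OF independent_empty] by simp

text \<open>No finiteness is needed: an infinite basis of \<open>C\<close> makes \<open>dim C = 0\<close>, and then \<open>{0}\<close>
  is a complement.\<close>

lemma subspace_complement_exists:
  assumes "subspace C" "subspace D" "D \<subseteq> C"
  obtains C' where "subspace C'" "C' \<subseteq> C" "dim C' = dim C - dim D" "C' \<inter> D = {0}"
proof -
  obtain BD where BD: "BD \<subseteq> D" "independent BD" "D \<subseteq> span BD" "card BD = dim D"
    by (rule basis_exists)
  obtain B where B: "BD \<subseteq> B" "B \<subseteq> C" "independent B" "C \<subseteq> span B"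
    using maximal_independent_subset_extend[of BD C] BD(1,2) assms(3) by blast
  have card_B: "card B = dim C"
    using B basis_card_eq_dim by blast
  show ?thesis
  proof (cases "finite B")
    case True
    show ?thesis
    proof (rule that)
      show "subspace (span (B - BD))" "span (B - BD) \<subseteq> C"
        using B(2) assms(1) span_minimal[of "B - BD" C] by auto
      have "dim (span (B - BD)) = card (B - BD)"
        using B(3) by (intro dim_span_eq_card_independent) (rule independent_mono, auto)
      then show "dim (span (B - BD)) = dim C - dim D"
        using True B(1) card_B BD(4) by (simp add: card_Diff_subset finite_subset)
      have "span BD = D"
        using BD(1,3) assms(2) by (rule span_subspace)
      then show "span (B - BD) \<inter> D = {0}"
        using span_Int_span_eq_zero[OF B(3), of "B - BD" BD] B(1) by auto
    qed
  next
    case False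
    show ?thesis
    proof (rule that)
      show "dim {0} = dim C - dim D"
        using False card_B dim_single_0 by simp
    qed (use subspace_0[OF assms(1)] subspace_0[OF assms(2)] in auto)
  qed
qed

lemma dim_insert_finite:
  assumes "finite S" "x \<notin> span S"
  shows "dim (insert x S) = Suc (dim S)"
proof -
  obtain B where B: "B \<subseteq> S" "independent B" "S \<subseteq> span B" "card B = dim S"
    by (rule basis_exists)
  have "span B = span S"
    unfolding span_eq using B(1,3) span_superset[of S] by blast
  then have x_notin: "x \<notin> span B"
    using assms(2) by simp
  have "dim (insert x S) = card (insert x B)"
  proof (rule basis_card_eq_dim[symmetric])
    show "insert x B \<subseteq> insert x S"
      using B(1) by blast
    show "insert x S \<subseteq> span (insert x B)"
      using B(3) span_mono[OF subset_insertI[of B x]] span_base[OF insertI1[of x B]] by blast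
    show "independent (insert x B)"
      using x_notin B(2) by (rule independent_insertI)
  qed
  also have "\<dots> = Suc (card B)"
    using finite_subset[OF B(1) assms(1)] x_notin span_base[of x B] by (auto simp: card_insert_if)
  finally show ?thesis
    using B(4) by simp
qed

end

lemma finite_vecs: "finite (vecs n :: (nat \<Rightarrow> 'a::{finite,zero}) set)"
proof -
  have "vecs n = {v :: nat \<Rightarrow> 'a. \<forall>i. (i \<in> {..<n} \<longrightarrow> v i \<in> UNIV) \<and> (i \<notin> {..<n} \<longrightarrow> v i = 0)}"
    by (auto simp: vecs_def)
  then show ?thesis
    by (simp only:) (rule finite_set_of_finite_funs, simp_all)
qed

lemma eff_length_eq_card_Int_lessThan:
  assumes "X \<subseteq> vecs n"
  shows "eff_length X = card (code_support X \<inter> {..<n})"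
proof -
  have "code_support X \<subseteq> {..<n}"
    using assms unfolding code_support_def vecs_def by (auto simp: not_less[symmetric])
  then show ?thesis
    by (simp add: eff_length_def Int_absorb2)
qed

lemma code_support_span_insert:
  assumes "fvs.subspace D"
  shows "code_support (fvs.span (insert c D)) = code_support D \<union> {j. c j \<noteq> 0}"
proof
  show "code_support (fvs.span (insert c D)) \<subseteq> code_support D \<union> {j. c j \<noteq> 0}"
  proof
    fix j
    assume "j \<in> code_support (fvs.span (insert c D))"
    then obtain x where x: "x \<in> fvs.span (insert c D)" "x j \<noteq> 0"
      unfolding code_support_def by auto
    then obtain a where "x - vscale a c \<in> D"
      using fvs.span_breakdown_eq[of x c D] x(1) fvs.span_eq_iff[THEN iffD2, OF assms] by auto
    moreover have "x j = (x - vscale a c) j + a * c j"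
      by (simp add: vscale_def)
    ultimately show "j \<in> code_support D \<union> {j. c j \<noteq> 0}"
      using x(2) unfolding code_support_def by (cases "c j = 0") force+
  qed
  show "code_support D \<union> {j. c j \<noteq> 0} \<subseteq> code_support (fvs.span (insert c D))"
    unfolding code_support_def using fvs.span_superset[of "insert c D"] by blast
qed

definition weight_on :: "nat set \<Rightarrow> (nat \<Rightarrow> 'a::zero) \<Rightarrow> nat" where
  "weight_on T v = card {j \<in> T. v j \<noteq> 0}"

lemma hwt_eq_weight_on: "hwt n v = weight_on {..<n} v"
  unfolding hwt_def weight_on_def by simp

lemma card_code_support_span_insert:
  assumes "fvs.subspace D" "finite T"
  shows "card (code_support (fvs.span (insert c D)) \<inter> T) =
    card (code_support D \<inter> T) + weight_on (T - code_support D) c"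
proof -
  have "code_support (fvs.span (insert c D)) \<inter> T =
      (code_support D \<inter> T) \<union> {j \<in> T - code_support D. c j \<noteq> 0}"
    using code_support_span_insert[OF assms(1)] by auto
  then show ?thesis
    unfolding weight_on_def using assms(2) by (simp add: card_Un_disjoint disjoint_iff)
qed

lemma card_nonzero_affine:
  fixes a b :: "'a::{finite,field}"
  shows "card {\<alpha>. a + \<alpha> * b \<noteq> 0} = (if b \<noteq> 0 then CARD('a) - 1 else if a \<noteq> 0 then CARD('a) else 0)"
proof (cases "b = 0")
  case False
  then have "{\<alpha>. a + \<alpha> * b \<noteq> 0} = UNIV - {- a / b}"
    by (auto simp: field_simps) (metis add.commute add_eq_0_iff)
  then show ?thesis
    using False by (simp add: card_Diff_singleton)
qed simp

lemma sum_weight_on_line: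
  fixes u v :: "nat \<Rightarrow> 'a::{finite,field}"
  assumes "finite T"
  shows "(\<Sum>\<alpha>\<in>UNIV. weight_on T (u + vscale \<alpha> v)) =
    (CARD('a) - 1) * weight_on T v + CARD('a) * weight_on {j \<in> T. v j = 0} u"
proof -
  have "(\<Sum>\<alpha>\<in>UNIV. weight_on T (u + vscale \<alpha> v)) =
      (\<Sum>\<alpha>\<in>(UNIV::'a set). \<Sum>j\<in>T. if u j + \<alpha> * v j \<noteq> 0 then 1 else 0)"
    unfolding weight_on_def using assms by (simp add: vscale_def sum.If_cases Int_def)
  also have "\<dots> = (\<Sum>j\<in>T. card {\<alpha>::'a. u j + \<alpha> * v j \<noteq> 0})"
    by (subst sum.swap) (simp add: sum.If_cases Int_def)
  also have "\<dots> = (\<Sum>j\<in>T. if v j \<noteq> 0 then CARD('a) - 1 else if u j \<noteq> 0 then CARD('a) else 0)"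
    by (simp add: card_nonzero_affine)
  also have "\<dots> = (CARD('a) - 1) * weight_on T v + CARD('a) * weight_on {j \<in> T. v j = 0} u"
    using assms by (simp add: weight_on_def sum.If_cases Int_def)
  finally show ?thesis .
qed

text \<open>The residual code of \<open>v\<close> lives on the coordinates where \<open>v\<close> vanishes.\<close>

lemma residual_weight_bound:
  fixes u v :: "nat \<Rightarrow> 'a::{finite,field}"
  assumes "finite T" "\<And>\<alpha>. weight_on T v \<le> weight_on T (u + vscale \<alpha> v)"
  shows "ceil_div (weight_on T v) CARD('a) \<le> weight_on {j \<in> T. v j = 0} u"
proof -
  let ?q = "CARD('a)" and ?w = "weight_on T v"
  have "?q * ?w \<le> (\<Sum>\<alpha>\<in>UNIV. weight_on T (u + vscale \<alpha> v))"
    using sum_mono[of "UNIV :: 'a set" "\<lambda>_. ?w"] assms(2) by simp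
  also have "\<dots> = (?q - 1) * ?w + ?q * weight_on {j \<in> T. v j = 0} u"
    by (rule sum_weight_on_line[OF assms(1)])
  finally have "?q * ?w \<le> (?q - 1) * ?w + ?q * weight_on {j \<in> T. v j = 0} u" .
  moreover obtain r where "?q = Suc r"
    using zero_less_card_finite gr0_implies_Suc by blast
  ultimately have "?w \<le> ?q * weight_on {j \<in> T. v j = 0} u"
    by simp
  then show ?thesis
    by (simp add: ceil_div_le_iff)
qed

theorem griesmer_bound:
  fixes C :: "(nat \<Rightarrow> 'a::{finite,field}) set"
  assumes "fvs.subspace C" "fvs.dim C = k" "finite T"
    and "\<And>v. v \<in> C \<Longrightarrow> v \<noteq> 0 \<Longrightarrow> d \<le> weight_on T v"
  shows "griesmer CARD('a) k d \<le> card (code_support C \<inter> T)"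
  using assms
proof (induction k arbitrary: C T d)
  case 0
  then show ?case
    by (simp add: griesmer_def)
next
  case (Suc k)
  let ?q = "CARD('a)"
  have "\<not> C \<subseteq> fvs.span {}"
    using fvs.dim_le_card[of C "{}"] Suc.prems(2) by auto
  then obtain v0 where "v0 \<in> C \<and> v0 \<noteq> 0"
    by auto
  from ex_has_least_nat[of "\<lambda>v. v \<in> C \<and> v \<noteq> 0", OF this, of "weight_on T"]
  obtain v where v: "v \<in> C" "v \<noteq> 0"
    and v_min: "\<And>u. u \<in> C \<Longrightarrow> u \<noteq> 0 \<Longrightarrow> weight_on T v \<le> weight_on T u"
    by blast
  define w where "w = weight_on T v"
  define T' where "T' = {j \<in> T. v j = 0}"
  have "fvs.span {v} \<subseteq> C"
    using v(1) Suc.prems(1) by (intro fvs.span_minimal) auto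
  then obtain C' where C': "fvs.subspace C'" "C' \<subseteq> C"
    "fvs.dim C' = fvs.dim C - fvs.dim (fvs.span {v})" "C' \<inter> fvs.span {v} = {0}"
    by (rule fvs.subspace_complement_exists[OF Suc.prems(1) fvs.subspace_span])
  have "fvs.dim (fvs.span {v}) = 1"
    using v(2) fvs.dim_span_eq_card_independent[of "{v}"] by simp
  then have dim_C': "fvs.dim C' = k"
    using C'(3) Suc.prems(2) by simp
  have residual_weight: "ceil_div w ?q \<le> weight_on T' u" if u: "u \<in> C'" "u \<noteq> 0" for u
    unfolding w_def T'_def
  proof (rule residual_weight_bound[OF Suc.prems(3)])
    fix \<alpha> :: 'a
    have "vscale (- \<alpha>) v \<in> fvs.span {v}"
      by (intro fvs.span_scale fvs.span_base) simp
    then have "u \<noteq> vscale (- \<alpha>) v"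
      using u C'(4) by blast
    then have "u + vscale \<alpha> v \<noteq> 0"
      by (metis add_eq_0_iff2 fvs.scale_minus_left)
    with u(1) C'(2) v(1) Suc.prems(1) have "u + vscale \<alpha> v \<in> C" "u + vscale \<alpha> v \<noteq> 0"
      using fvs.subspace_add fvs.subspace_scale by blast+
    then show "weight_on T v \<le> weight_on T (u + vscale \<alpha> v)"
      by (rule v_min)
  qed
  have "finite T'"
    using Suc.prems(3) by (simp add: T'_def)
  then have residual: "griesmer ?q k (ceil_div w ?q) \<le> card (code_support C' \<inter> T')"
    using residual_weight by (rule Suc.IH[OF C'(1) dim_C'])
  have "griesmer ?q (Suc k) d \<le> griesmer ?q (Suc k) w"
    using Suc.prems(4)[OF v] unfolding w_def by (rule griesmer_mono)
  also have "\<dots> = w + griesmer ?q k (ceil_div w ?q)"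
    by (simp add: griesmer_Suc)
  also have "\<dots> \<le> w + card (code_support C' \<inter> T')"
    using residual by simp
  also have "\<dots> = card ({j \<in> T. v j \<noteq> 0} \<union> (code_support C' \<inter> T'))"
    using Suc.prems(3) unfolding w_def weight_on_def T'_def by (subst card_Un_disjoint) auto
  also have "\<dots> \<le> card (code_support C \<inter> T)"
    using v(1) C'(2) Suc.prems(3) unfolding code_support_def T'_def by (intro card_mono) auto
  finally show ?case .
qed

lemma exists_low_weight_outside_support:
  fixes C D :: "(nat \<Rightarrow> 'a::{finite,field}) set"
  assumes C: "fvs.subspace C" "fvs.dim C = k" and T: "finite T"
    and D: "fvs.subspace D" "D \<subseteq> C" "fvs.dim D = i"
      "card (code_support D \<inter> T) = griesmer CARD('a) i d"
    and short: "card T < griesmer CARD('a) i d + griesmer CARD('a) (k - i) (ceil_div d (CARD('a) ^ i) + 1)"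
  obtains c where "c \<in> C" "c \<notin> D" "weight_on (T - code_support D) c \<le> ceil_div d (CARD('a) ^ i)"
proof -
  let ?q = "CARD('a)" and ?t = "ceil_div d (CARD('a) ^ i)" and ?T' = "T - code_support D"
  obtain C' where C': "fvs.subspace C'" "C' \<subseteq> C" "fvs.dim C' = fvs.dim C - fvs.dim D" "C' \<inter> D = {0}"
    by (rule fvs.subspace_complement_exists[OF C(1) D(1,2)])
  have dim_C': "fvs.dim C' = k - i"
    using C'(3) C(2) D(3) by simp
  have "\<exists>c \<in> C'. c \<noteq> 0 \<and> weight_on ?T' c \<le> ?t"
  proof (rule ccontr)
    assume "\<not> ?thesis"
    then have "griesmer ?q (k - i) (?t + 1) \<le> card (code_support C' \<inter> ?T')"
      using T by (intro griesmer_bound[OF C'(1) dim_C']) force+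
    also have "\<dots> \<le> card ?T'"
      using T by (intro card_mono) auto
    also have "\<dots> = card T - griesmer ?q i d"
      using T D(4) by (simp add: card_Diff_subset_Int Int_commute)
    moreover have "griesmer ?q i d \<le> card T"
      using T D(4) card_mono[of T "code_support D \<inter> T"] by simp
    ultimately show False
      using short by linarith
  qed
  then show ?thesis
    using that C'(2,4) by blast
qed

lemma griesmer_subcode_extend:
  fixes C D :: "(nat \<Rightarrow> 'a::{finite,field}) set"
  assumes C: "fvs.subspace C" "finite C" "fvs.dim C = k"
    and T: "finite T" and min_weight: "\<And>v. v \<in> C \<Longrightarrow> v \<noteq> 0 \<Longrightarrow> d \<le> weight_on T v"
    and D: "fvs.subspace D" "D \<subseteq> C" "fvs.dim D = i"
      "card (code_support D \<inter> T) = griesmer CARD('a) i d"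
    and short: "card T < griesmer CARD('a) i d + griesmer CARD('a) (k - i) (ceil_div d (CARD('a) ^ i) + 1)"
  obtains E where "fvs.subspace E" "D \<subset> E" "E \<subseteq> C" "fvs.dim E = Suc i"
    "card (code_support E \<inter> T) = griesmer CARD('a) (Suc i) d"
proof -
  let ?q = "CARD('a)"
  obtain c where c: "c \<in> C" "c \<notin> D" "weight_on (T - code_support D) c \<le> ceil_div d (?q ^ i)"
    using exists_low_weight_outside_support[OF C(1,3) T D short] by blast
  define E where "E = fvs.span (insert c D)"
  have span_D: "fvs.span D = D"
    using D(1) by simp
  have "D \<subset> E"
    using c(2) fvs.span_superset[of "insert c D"] unfolding E_def by blast
  moreover have "E \<subseteq> C"
    unfolding E_def using c(1) D(2) C(1) by (intro fvs.span_minimal) auto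
  moreover have dim_E: "fvs.dim E = Suc i"
    unfolding E_def using fvs.dim_insert_finite[of D c] finite_subset[OF D(2) C(2)] c(2) span_D D(3)
    by simp
  moreover have "card (code_support E \<inter> T) \<le> griesmer ?q (Suc i) d"
    unfolding E_def card_code_support_span_insert[OF D(1) T] using D(4) c(3)
    by (simp add: griesmer_def)
  moreover have "griesmer ?q (Suc i) d \<le> card (code_support E \<inter> T)"
    using \<open>E \<subseteq> C\<close> min_weight T dim_E by (intro griesmer_bound) (auto simp: E_def)
  ultimately show ?thesis
    using that[of E] unfolding E_def by simp
qed

lemma griesmer_subcode_chain:
  fixes C :: "(nat \<Rightarrow> 'a::{finite,field}) set"
  assumes C: "fvs.subspace C" "finite C" "fvs.dim C = k"
    and T: "finite T" and min_weight: "\<And>v. v \<in> C \<Longrightarrow> v \<noteq> 0 \<Longrightarrow> d \<le> weight_on T v"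
    and short: "\<And>j. j < m \<Longrightarrow>
      card T < griesmer CARD('a) j d + griesmer CARD('a) (k - j) (ceil_div d (CARD('a) ^ j) + 1)"
  obtains Cs where "\<And>i. i \<le> m \<Longrightarrow> fvs.subspace (Cs i) \<and> Cs i \<subseteq> C \<and> fvs.dim (Cs i) = i \<and>
      card (code_support (Cs i) \<inter> T) = griesmer CARD('a) i d"
    and "\<And>i. i < m \<Longrightarrow> Cs i \<subset> Cs (Suc i)"
proof -
  have "\<exists>Cs. (\<forall>i \<le> m. fvs.subspace (Cs i) \<and> Cs i \<subseteq> C \<and> fvs.dim (Cs i) = i \<and>
      card (code_support (Cs i) \<inter> T) = griesmer CARD('a) i d) \<and> (\<forall>i < m. Cs i \<subset> Cs (Suc i))"
    using short
  proof (induction m)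
    case 0
    have "code_support {0 :: nat \<Rightarrow> 'a} = {}"
      by (simp add: code_support_def)
    then show ?case
      using fvs.subspace_0[OF C(1)] fvs.dim_single_0
      by (intro exI[of _ "\<lambda>_. {0}"]) (simp add: griesmer_def)
  next
    case (Suc m)
    then obtain Cs where Cs: "\<forall>i \<le> m. fvs.subspace (Cs i) \<and> Cs i \<subseteq> C \<and> fvs.dim (Cs i) = i \<and>
        card (code_support (Cs i) \<inter> T) = griesmer CARD('a) i d" "\<forall>i < m. Cs i \<subset> Cs (Suc i)"
      by (metis less_SucI)
    have "fvs.subspace (Cs m)" "Cs m \<subseteq> C" "fvs.dim (Cs m) = m"
      "card (code_support (Cs m) \<inter> T) = griesmer CARD('a) m d"
      using Cs(1) by simp_all
    from griesmer_subcode_extend[OF C T min_weight this Suc.prems[OF lessI]]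
    obtain E where E: "fvs.subspace E" "Cs m \<subset> E" "E \<subseteq> C" "fvs.dim E = Suc m"
      "card (code_support E \<inter> T) = griesmer CARD('a) (Suc m) d" .
    let ?Cs = "Cs(Suc m := E)"
    have "fvs.subspace (?Cs i) \<and> ?Cs i \<subseteq> C \<and> fvs.dim (?Cs i) = i \<and>
        card (code_support (?Cs i) \<inter> T) = griesmer CARD('a) i d" if "i \<le> Suc m" for i
      using that Cs(1) E by (cases "i = Suc m") simp_all
    moreover have "?Cs i \<subset> ?Cs (Suc i)" if "i < Suc m" for i
      using that Cs(2) E(2) by (cases "i = m") simp_all
    ultimately show ?case
      by blast
  qed
  then show ?thesis
    using that by blast
qed

theorem proposition2:
  fixes C :: "(nat \<Rightarrow> 'a::{finite,field}) set"
    and n k d k1 :: nat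
  assumes "linear_code n k d C"
    and "griesmer_optimal CARD('a) n k d"
    and "k1 = min (Gamma CARD('a) n k d) (k - 1)"
  shows "\<exists>Cs :: nat \<Rightarrow> (nat \<Rightarrow> 'a) set.
           (\<forall>i\<in>{1..k1}. fvs.subspace (Cs i) \<and> Cs i \<subset> C \<and> fvs.dim (Cs i) = i
                         \<and> eff_length (Cs i) = griesmer CARD('a) i d) \<and>
           (\<forall>i. 1 \<le> i \<and> i < k1 \<longrightarrow> Cs i \<subset> Cs (Suc i))"
proof -
  let ?q = "CARD('a)"
  have C: "fvs.subspace C" "C \<subseteq> vecs n" "fvs.dim C = k"
    and min_weight: "\<And>v. v \<in> C \<Longrightarrow> v \<noteq> 0 \<Longrightarrow> d \<le> weight_on {..<n} v"
    using assms(1) by (auto simp: linear_code_def hwt_eq_weight_on)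
  have short: "card {..<n} < griesmer ?q j d + griesmer ?q (k - j) (ceil_div d (?q ^ j) + 1)"
    if "j < k1" for j
    using that assms(3) less_griesmer_split_if_less_Gamma[of ?q j n k d] by simp
  obtain Cs where Cs: "\<And>i. i \<le> k1 \<Longrightarrow> fvs.subspace (Cs i) \<and> Cs i \<subseteq> C \<and> fvs.dim (Cs i) = i \<and>
      card (code_support (Cs i) \<inter> {..<n}) = griesmer ?q i d"
    and chain: "\<And>i. i < k1 \<Longrightarrow> Cs i \<subset> Cs (Suc i)"
    using griesmer_subcode_chain[OF C(1) finite_subset[OF C(2) finite_vecs] C(3) finite_lessThan]
      min_weight short by metis
  have "i < k" if "i \<in> {1..k1}" for i
    using that assms(3) by (simp, arith)
  then have "Cs i \<subset> C" if "i \<in> {1..k1}" for i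
    using that Cs[of i] C(3) by fastforce
  moreover have "eff_length (Cs i) = card (code_support (Cs i) \<inter> {..<n})" if "i \<le> k1" for i
    using that Cs[of i] C(2) by (intro eff_length_eq_card_Int_lessThan) blast
  ultimately show ?thesis
    using Cs chain by (intro exI[of _ Cs]) simp
qed

end
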